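(* Let $0<q<1$ and $\Pi\sim\mathrm{Mallows}(\mathbb{N},q)$. Let $T_1:=\inf\{j\ge1:\Pi([j])=[j]\}$ (which is a.s. finite), set $X_1:=T_1$ and let $\Sigma_1$ be the permutation of $[X_1]$ given by $\Sigma_1(j)=\Pi(j)$. Fix $\ell\in\mathbb{N}$ and real numbers $a_1,\dots,a_\ell$, not all zero, and let $Y_1:=\sum_{j=1}^\ell a_jC_j(\Sigma_1)$. Then $\mathrm{Var}\bigl(Y_1\,\mathbb{E}X_1-X_1\,\mathbb{E}Y_1\bigr)>0$.
   Context: For $0<q<1$, $\Pi\sim\mathrm{Mallows}(\mathbb{N},q)$ is the random injection $\mathbb{N}\to\mathbb{N}$ constructed as follows: let $Z_1,Z_2,\dots$ be i.i.d. geometric with $\mathbb{P}(Z_i=k)=(1-q)q^{k-1}$, $k\ge1$; set $\Pi(1)=Z_1$ and, for $i>1$, let $\Pi(i)$ be the $Z_i$-th smallest element of $\mathbb{N}\setminus\{\Pi(1),\dots,\Pi(i-1)\}$. $[j]=\{1,\dots,j\}$ and $C_j(\pi)$ is the number of cycles of length $j$ of a permutation $\pi$. It is known that $\mathbb{E}T_1^2<\infty$. *)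

theory Defs
  imports "HOL-Probability.Probability" "HOL-Library.Infinite_Set"
begin

text \<open>Sample space: an i.i.d. sequence W 1, W 2, ... of geometric variables
  on {0,1,2,...} with P(W = n) = q^n (1-q); the paper's Z_i is W i + 1.
  (The coordinate 0 is unused.)\<close>
definition mallows_space :: "real \<Rightarrow> (nat \<Rightarrow> nat) measure" where
  "mallows_space q = PiM UNIV (\<lambda>_. measure_pmf (geometric_pmf (1 - q)))"

text \<open>First n values Pi(1),...,Pi(n) of the Mallows injection: Pi(i) is the
  Z_i-th smallest element (i.e. index W i, counting from 0) of the
  positive integers not yet used.\<close>
fun mallows_list :: "(nat \<Rightarrow> nat) \<Rightarrow> nat \<Rightarrow> nat list" where
  "mallows_list w 0 = []"
| "mallows_list w (Suc n) =
     mallows_list w n @ [enumerate ({1..} - set (mallows_list w n)) (w (Suc n))]"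

definition mallows_perm :: "(nat \<Rightarrow> nat) \<Rightarrow> nat \<Rightarrow> nat" where
  "mallows_perm w i = mallows_list w i ! (i - 1)"

definition first_block :: "(nat \<Rightarrow> nat) \<Rightarrow> nat" where
  "first_block w = (LEAST j. j \<ge> 1 \<and> mallows_perm w ` {1..j} = {1..j})"

definition first_block_perm :: "(nat \<Rightarrow> nat) \<Rightarrow> nat \<Rightarrow> nat" where
  "first_block_perm w x = (if x \<in> {1..first_block w} then mallows_perm w x else x)"

definition perm_orbit :: "('a \<Rightarrow> 'a) \<Rightarrow> 'a \<Rightarrow> 'a set" where
  "perm_orbit \<sigma> x = {(\<sigma> ^^ k) x | k. True}"

definition cycle_count :: "('a \<Rightarrow> 'a) \<Rightarrow> 'a set \<Rightarrow> nat \<Rightarrow> nat" where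
  "cycle_count \<sigma> A j = card {perm_orbit \<sigma> x | x. x \<in> A \<and> card (perm_orbit \<sigma> x) = j}"

end

theory Submission
  imports Defs
begin

text \<open>With \<open>W\<^sub>i = Z\<^sub>i - 1\<close>, the injection maps \<open>[j]\<close> onto \<open>[j]\<close> exactly when
  \<open>i + W\<^sub>i \<le> j\<close> for all \<open>i \<le> j\<close>. This closure event has probability
  \<open>\<Prod>\<^sub>i\<^sub>\<le>\<^sub>j (1 - q\<^sup>i)\<close>, bounded below uniformly in \<open>j\<close>, and splitting at the last
  closure before \<open>j\<close> gives a renewal equation for \<open>r\<^sub>k = P(T\<^sub>1 > k)\<close> that bounds
  \<open>\<Sum> k r\<^sub>k\<close>; hence \<open>E T\<^sub>1\<^sup>2 < \<infinity>\<close>, the variance is finite, and it vanishes only if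
  \<open>V = Y\<^sub>1 E X\<^sub>1 - X\<^sub>1 E Y\<^sub>1\<close> is a.s. constant. For every \<open>n \<ge> 1\<close> the event
  \<open>W\<^sub>1 = \<dots> = W\<^sub>n\<^sub>-\<^sub>1 = 1, W\<^sub>n = 0\<close> has positive probability and on it \<open>\<Sigma>\<^sub>1\<close> is an
  \<open>n\<close>-cycle, so \<open>V = a\<^sub>n E X\<^sub>1 - n E Y\<^sub>1\<close> there (with \<open>a\<^sub>n = 0\<close> for \<open>n > \<ell>\<close>). A
  constant value forces \<open>E Y\<^sub>1 = 0\<close> and then \<open>a\<^sub>n E X\<^sub>1 = 0\<close> for all \<open>n\<close>, contradicting
  \<open>E X\<^sub>1 > 0\<close>.\<close>

definition closed_at :: "(nat \<Rightarrow> nat) \<Rightarrow> nat \<Rightarrow> bool" where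
  "closed_at w j \<longleftrightarrow> (\<forall>i\<in>{1..j}. i + w i \<le> j)"

fun max_reach :: "(nat \<Rightarrow> nat) \<Rightarrow> nat \<Rightarrow> nat" where
  "max_reach w 0 = 0"
| "max_reach w (Suc n) = max (max_reach w n) (Suc n + w (Suc n))"

lemma max_reach_ge: "n \<le> max_reach w n"
  by (induction n) auto

lemma max_reach_le_iff: "max_reach w n \<le> t \<longleftrightarrow> (\<forall>i\<in>{1..n}. i + w i \<le> t)"
proof (induction n)
  case (Suc n)
  have "{1..Suc n} = insert (Suc n) {1..n}" by auto
  with Suc show ?case by auto
qed simp

lemma enumerate_greaterThan: "enumerate {N<..} k = Suc N + (k::nat)"
proof (induction k arbitrary: N)
  case 0
  then show ?case by (simp add: enumerate_0 Least_equality)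
next
  case (Suc k)
  have "enumerate {N<..} 0 = Suc N" by (simp add: enumerate_0 Least_equality)
  moreover have "{N<..} - {Suc N} = {Suc N<..}" by auto
  ultimately show ?case using Suc by (simp add: enumerate_Suc')
qed

lemma enumerate_Un_greaterThan:
  fixes H :: "nat set"
  assumes "finite H" "H \<subseteq> {..N}"
  shows "(k < card H \<longrightarrow> enumerate (H \<union> {N<..}) k \<in> H) \<and>
         (card H \<le> k \<longrightarrow> enumerate (H \<union> {N<..}) k = Suc N + (k - card H))"
  using assms
proof (induction "card H" arbitrary: H k)
  case 0
  then have "H = {}" by auto
  then show ?case by (simp add: enumerate_greaterThan)
next
  case (Suc h)
  define m where "m = Min H"
  have mH: "m \<in> H" using Suc m_def by (metis Min_in card_0_eq nat.distinct(1))
  have enum_0: "enumerate (H \<union> {N<..}) 0 = m"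
    unfolding enumerate_0
  proof (rule Least_equality)
    show "m \<in> H \<union> {N<..}" using mH by auto
    fix y assume "y \<in> H \<union> {N<..}"
    moreover have "m \<le> N" using mH Suc.prems(2) by auto
    ultimately show "m \<le> y" unfolding m_def using Suc.prems(1) by auto
  qed
  have rem: "(H \<union> {N<..}) - {m} = (H - {m}) \<union> {N<..}"
    using mH Suc.prems by auto
  have card_rem: "h = card (H - {m})" using Suc.hyps mH Suc.prems by simp
  show ?case
  proof (cases k)
    case 0
    then show ?thesis using enum_0 mH Suc.hyps by auto
  next
    case (Suc k')
    have IH: "(k' < card (H - {m}) \<longrightarrow> enumerate ((H - {m}) \<union> {N<..}) k' \<in> H - {m}) \<and>
        (card (H - {m}) \<le> k' \<longrightarrow>
          enumerate ((H - {m}) \<union> {N<..}) k' = Suc N + (k' - card (H - {m})))"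
      using Suc.hyps(1)[OF card_rem] Suc.prems by auto
    have "enumerate (H \<union> {N<..}) k = enumerate ((H - {m}) \<union> {N<..}) k'"
      using Suc by (simp add: enumerate_Suc' enum_0 rem)
    then show ?thesis using IH Suc card_rem Suc.hyps(2) by auto
  qed
qed

lemma length_mallows_list [simp]: "length (mallows_list w n) = n"
  by (induction n) auto

lemma take_mallows_list: "i \<le> n \<Longrightarrow> take i (mallows_list w n) = mallows_list w i"
  by (induction n) (auto simp: le_Suc_eq)

lemma nth_mallows_list:
  assumes "1 \<le> i" "i \<le> n"
  shows "mallows_list w n ! (i - 1) = mallows_perm w i"
proof -
  have "mallows_list w n ! (i - 1) = take i (mallows_list w n) ! (i - 1)"
    using assms by simp
  then show ?thesis using take_mallows_list[OF assms(2)] by (simp add: mallows_perm_def)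
qed

lemma mallows_list_cong:
  "(\<And>i. i \<le> n \<Longrightarrow> w i = w' i) \<Longrightarrow> mallows_list w n = mallows_list w' n"
  by (induction n) auto

lemma mallows_perm_image: "mallows_perm w ` {1..j} = set (mallows_list w j)"
proof -
  have "set (mallows_list w j) = (\<lambda>i. mallows_list w j ! (i - 1)) ` Suc ` {..<j}"
    by (auto simp: in_set_conv_nth image_image)
  also have "\<dots> = (\<lambda>i. mallows_list w j ! (i - 1)) ` {1..j}"
    by (simp only: image_Suc_lessThan)
  also have "\<dots> = mallows_perm w ` {1..j}"
    by (rule image_cong[OF refl], rule nth_mallows_list) auto
  finally show ?thesis ..
qed

lemma mallows_list_invariant:
  "distinct (mallows_list w n) \<and> set (mallows_list w n) \<subseteq> {1..max_reach w n} \<and>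
   (1 \<le> n \<longrightarrow> max_reach w n \<in> set (mallows_list w n))"
proof (induction n)
  case (Suc n)
  define L where "L = mallows_list w n"
  define R where "R = max_reach w n"
  define H where "H = {1..R} - set L"
  have L: "distinct L" "set L \<subseteq> {1..R}" "1 \<le> n \<longrightarrow> R \<in> set L"
    using Suc unfolding L_def R_def by auto
  have "card (set L) = n" using L(1) by (simp add: distinct_card L_def)
  then have card_H: "card H = R - n" unfolding H_def using L(2) by (simp add: card_Diff_subset)
  have "n \<le> R" unfolding R_def by (rule max_reach_ge)
  have H: "finite H" "H \<subseteq> {..R}" unfolding H_def by auto
  define e where "e = enumerate (H \<union> {R<..}) (w (Suc n))"
  have "{1..} - set L = H \<union> {R<..}" unfolding H_def using L(2) by auto
  then have list: "mallows_list w (Suc n) = L @ [e]" unfolding L_def e_def by simp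
  show ?case
  proof (cases "w (Suc n) < card H")
    case True
    \<comment> \<open>the new value fills a gap below the current maximum\<close>
    then have "e \<in> H" using enumerate_Un_greaterThan[OF H] unfolding e_def by blast
    moreover have "max_reach w (Suc n) = R" using True card_H \<open>n \<le> R\<close> unfolding R_def by auto
    moreover have "n \<noteq> 0" using True card_H unfolding R_def by (cases n) auto
    ultimately show ?thesis using L unfolding list H_def by auto
  next
    case False
    then have e: "e = Suc R + (w (Suc n) - card H)"
      using enumerate_Un_greaterThan[OF H] unfolding e_def by auto
    then have "max_reach w (Suc n) = e" using card_H \<open>n \<le> R\<close> False unfolding R_def by auto
    moreover have "e \<notin> set L" using e L(2) by auto
    ultimately show ?thesis using L e unfolding list by auto
  qed
qed simp

lemma mallows_perm_image_eq_iff_closed_at: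
  assumes "1 \<le> j"
  shows "mallows_perm w ` {1..j} = {1..j} \<longleftrightarrow> closed_at w j"
proof -
  have inv: "distinct (mallows_list w j)" "set (mallows_list w j) \<subseteq> {1..max_reach w j}"
     "max_reach w j \<in> set (mallows_list w j)"
    using mallows_list_invariant[of w j] assms by auto
  have closed_iff: "closed_at w j \<longleftrightarrow> max_reach w j \<le> j"
    by (simp add: closed_at_def max_reach_le_iff)
  have card: "card (set (mallows_list w j)) = j" using inv(1) by (simp add: distinct_card)
  have "set (mallows_list w j) = {1..j} \<longleftrightarrow> max_reach w j \<le> j"
  proof
    assume "set (mallows_list w j) = {1..j}"
    then show "max_reach w j \<le> j" using inv(3) by auto
  next
    assume "max_reach w j \<le> j"
    then have "set (mallows_list w j) \<subseteq> {1..j}" using inv(2) by auto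
    then show "set (mallows_list w j) = {1..j}" using card by (intro card_subset_eq) auto
  qed
  then show ?thesis unfolding mallows_perm_image closed_iff .
qed

lemma first_block_eq_Least_closed_at: "first_block w = (LEAST j. 1 \<le> j \<and> closed_at w j)"
  unfolding first_block_def
  by (metis (lifting) mallows_perm_image_eq_iff_closed_at)

lemma first_block_le: "1 \<le> j \<Longrightarrow> closed_at w j \<Longrightarrow> first_block w \<le> j"
  unfolding first_block_eq_Least_closed_at by (rule Least_le) simp

lemma closed_at_add_iff:
  assumes "closed_at w m"
  shows "closed_at w (m + k) \<longleftrightarrow> closed_at (\<lambda>i. w (m + i)) k"
proof
  assume "closed_at w (m + k)"
  then show "closed_at (\<lambda>i. w (m + i)) k"
    unfolding closed_at_def by (metis add_le_cancel_left add.assoc atLeastAtMost_iff le_add2 trans_le_add2)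
next
  assume shifted: "closed_at (\<lambda>i. w (m + i)) k"
  show "closed_at w (m + k)"
    unfolding closed_at_def
  proof
    fix i assume i: "i \<in> {1..m + k}"
    show "i + w i \<le> m + k"
    proof (cases "i \<le> m")
      case True
      then have "i + w i \<le> m" using assms i unfolding closed_at_def by simp
      then show ?thesis by simp
    next
      case False
      then have "i - m \<in> {1..k}" using i by auto
      then have "(i - m) + w (m + (i - m)) \<le> k" using shifted unfolding closed_at_def by blast
      then show ?thesis using False by simp
    qed
  qed
qed

text \<open>On \<open>cyclic_block n\<close> the injection starts with \<open>\<Pi>(i) = i + 1\<close> for \<open>i < n\<close>
  (the second smallest free value, since \<open>1\<close> stays free) and \<open>\<Pi>(n) = 1\<close>.\<close>

definition cyclic_block :: "nat \<Rightarrow> (nat \<Rightarrow> nat) set" where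
  "cyclic_block n = {w. (\<forall>i\<in>{1..<n}. w i = 1) \<and> w n = 0}"

definition rotation :: "nat \<Rightarrow> nat \<Rightarrow> nat" where
  "rotation n x = (if x \<in> {1..n} then (if x < n then x + 1 else 1) else x)"

lemma mallows_list_cyclic_block_less:
  "w \<in> cyclic_block n \<Longrightarrow> k < n \<Longrightarrow> mallows_list w k = [2..<k+2]"
proof (induction k)
  case (Suc k)
  have "{1..} - set [2..<k+2] = {1} \<union> {Suc k<..}" by auto
  moreover have "enumerate ({1} \<union> {Suc k<..}) 1 = k + 2"
    using enumerate_Un_greaterThan[of "{1::nat}" "Suc k" 1] by auto
  moreover have "w (Suc k) = 1" using Suc.prems unfolding cyclic_block_def by auto
  ultimately show ?case using Suc by simp
qed simp

lemma mallows_list_cyclic_block: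
  assumes "w \<in> cyclic_block n" "1 \<le> n"
  shows "mallows_list w n = [2..<n+1] @ [1]"
proof -
  obtain k where k: "n = Suc k" using assms(2) by (cases n) auto
  have "{1..} - set [2..<k+2] = {1} \<union> {Suc k<..}" by auto
  moreover have "enumerate ({1} \<union> {Suc k<..}) 0 = 1"
    using enumerate_Un_greaterThan[of "{1::nat}" "Suc k" 0] by auto
  moreover have "w (Suc k) = 0" using assms(1) k unfolding cyclic_block_def by auto
  ultimately show ?thesis using mallows_list_cyclic_block_less[OF assms(1), of k] k by simp
qed

lemma mallows_perm_cyclic_block:
  assumes "w \<in> cyclic_block n" "x \<in> {1..n}"
  shows "mallows_perm w x = rotation n x"
proof -
  have "mallows_perm w x = ([2..<n+1] @ [1]) ! (x - 1)"
    using nth_mallows_list[of x n w] mallows_list_cyclic_block[OF assms(1)] assms(2) by simp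
  then show ?thesis using assms(2) by (auto simp: nth_append rotation_def)
qed

lemma rotation_image: "rotation n ` {1..j} = (if j < n then {2..j+1} else {1..n})" if "j \<le> n"
proof (cases "j < n")
  case True
  then have "rotation n ` {1..j} = Suc ` {1..j}"
    by (intro image_cong) (auto simp: rotation_def)
  then show ?thesis using True by simp
next
  case False
  have "rotation n ` {1..n} = {1..n}"
  proof (intro equalityI subsetI)
    fix x assume x: "x \<in> {1..n}"
    show "x \<in> rotation n ` {1..n}"
    proof (cases "x = 1")
      case True
      then show ?thesis using x by (intro image_eqI[of _ _ n]) (auto simp: rotation_def)
    next
      case False
      then show ?thesis using x by (intro image_eqI[of _ _ "x - 1"]) (auto simp: rotation_def)
    qed
  qed (auto simp: rotation_def)
  then show ?thesis using False that by simp
qed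

lemma first_block_cyclic_block:
  assumes "w \<in> cyclic_block n" "1 \<le> n"
  shows "first_block w = n"
proof -
  have image: "mallows_perm w ` {1..j} = rotation n ` {1..j}" if "j \<le> n" for j
    using that by (intro image_cong) (auto simp: mallows_perm_cyclic_block[OF assms(1)])
  show ?thesis
    unfolding first_block_def
  proof (rule Least_equality)
    show "1 \<le> n \<and> mallows_perm w ` {1..n} = {1..n}" using assms(2) image rotation_image by simp
  next
    fix j assume "1 \<le> j \<and> mallows_perm w ` {1..j} = {1..j}"
    then show "n \<le> j" using image[of j] rotation_image[of j n] by (cases "j < n") auto
  qed
qed

lemma first_block_perm_cyclic_block:
  "w \<in> cyclic_block n \<Longrightarrow> 1 \<le> n \<Longrightarrow> first_block_perm w = rotation n"
  by (intro ext)
    (auto simp: first_block_perm_def first_block_cyclic_block mallows_perm_cyclic_block rotation_def)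

lemma funpow_rotation: "x \<in> {1..n} \<Longrightarrow> (rotation n ^^ k) x = (x - 1 + k) mod n + 1"
proof (induction k)
  case (Suc k)
  define z where "z = (x - 1 + k) mod n"
  have "z < n" unfolding z_def using Suc.prems by simp
  have "(rotation n ^^ Suc k) x = rotation n (z + 1)" using Suc by (simp add: z_def)
  also have "\<dots> = (if Suc z = n then 0 else Suc z) + 1"
    using \<open>z < n\<close> by (simp add: rotation_def)
  also have "\<dots> = (x - 1 + Suc k) mod n + 1" by (simp add: z_def mod_Suc)
  finally show ?case .
qed auto

lemma perm_orbit_rotation: "x \<in> {1..n} \<Longrightarrow> perm_orbit (rotation n) x = {1..n}"
proof (intro equalityI subsetI)
  assume x: "x \<in> {1..n}"
  fix y
  show "y \<in> {1..n}" if "y \<in> perm_orbit (rotation n) x"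
    using that funpow_rotation[OF x] x by (auto simp: perm_orbit_def Suc_le_eq)
  show "y \<in> perm_orbit (rotation n) x" if y: "y \<in> {1..n}"
  proof -
    have "(rotation n ^^ (n + y - x)) x = ((y - 1) + n) mod n + 1"
      using funpow_rotation[OF x, of "n + y - x"] x y by (simp add: add.commute)
    also have "(y - 1 + n) mod n = y - 1" by (subst mod_add_self2) (use y in auto)
    also have "y - 1 + 1 = y" using y by simp
    finally show ?thesis unfolding perm_orbit_def by (auto intro!: exI[of _ "n + y - x"])
  qed
qed

lemma cycle_count_rotation:
  assumes "1 \<le> n"
  shows "cycle_count (rotation n) {1..n} j = (if j = n then 1 else 0)"
proof -
  have "{perm_orbit (rotation n) x |x. x \<in> {1..n} \<and> card (perm_orbit (rotation n) x) = j} =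
      {{1..n} |x. x \<in> {1..n} \<and> n = j}"
    by (intro Collect_cong ex_cong1) (auto simp: perm_orbit_rotation)
  also have "\<dots> = (if j = n then {{1..n}} else {})" using assms by auto
  finally show ?thesis unfolding cycle_count_def by simp
qed

lemma cycle_count_le_card: "finite A \<Longrightarrow> cycle_count \<sigma> A j \<le> card A"
proof -
  assume "finite A"
  have "cycle_count \<sigma> A j = card (perm_orbit \<sigma> ` {x \<in> A. card (perm_orbit \<sigma> x) = j})"
    unfolding cycle_count_def by (simp add: setcompr_eq_image)
  also have "\<dots> \<le> card {x \<in> A. card (perm_orbit \<sigma> x) = j}"
    using \<open>finite A\<close> by (intro card_image_le) simp
  also have "\<dots> \<le> card A" using \<open>finite A\<close> by (intro card_mono) auto
  finally show ?thesis .
qed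

lemma abs_sum_cycle_count_le:
  assumes "finite A"
  shows "\<bar>\<Sum>j\<in>J. a j * real (cycle_count \<sigma> A j)\<bar> \<le> (\<Sum>j\<in>J. \<bar>a j\<bar>) * card A"
proof -
  have "\<bar>\<Sum>j\<in>J. a j * real (cycle_count \<sigma> A j)\<bar> \<le> (\<Sum>j\<in>J. \<bar>a j * real (cycle_count \<sigma> A j)\<bar>)"
    by (rule sum_abs)
  also have "\<dots> \<le> (\<Sum>j\<in>J. \<bar>a j\<bar> * card A)"
    using cycle_count_le_card[OF assms] by (intro sum_mono) (simp add: abs_mult mult_left_mono)
  finally show ?thesis by (simp add: sum_distrib_right)
qed

definition cycle_statistic :: "(nat \<Rightarrow> real) \<Rightarrow> nat \<Rightarrow> (nat \<Rightarrow> nat) \<Rightarrow> real" where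
  "cycle_statistic a l w =
    (\<Sum>j=1..l. a j * real (cycle_count (first_block_perm w) {1..first_block w} j))"

lemma abs_cycle_statistic_le:
  "\<bar>cycle_statistic a l w\<bar> \<le> (\<Sum>j=1..l. \<bar>a j\<bar>) * real (first_block w)"
  unfolding cycle_statistic_def using abs_sum_cycle_count_le[of "{1..first_block w}"] by simp

lemma cycle_statistic_cyclic_block:
  assumes "w \<in> cyclic_block n" "1 \<le> n"
  shows "cycle_statistic a l w = (if n \<le> l then a n else 0)"
proof -
  have "a j * real (cycle_count (first_block_perm w) {1..first_block w} j) = (if j = n then a n else 0)"
    for j
    using cycle_count_rotation[OF assms(2), of j]
    by (simp add: first_block_perm_cyclic_block[OF assms] first_block_cyclic_block[OF assms])
  then have "cycle_statistic a l w = (\<Sum>j=1..l. if j = n then a n else 0)"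
    unfolding cycle_statistic_def by (intro sum.cong) auto
  also have "\<dots> = (if n \<le> l then a n else 0)" using assms(2) by (simp add: sum.delta)
  finally show ?thesis .
qed

lemma sum_of_index_weighted_eq_sum_of_tails:
  fixes r :: "nat \<Rightarrow> real"
  shows "(\<Sum>k\<le>N. real k * r k) = (\<Sum>j<N. (\<Sum>k\<le>N. r k) - (\<Sum>k\<le>j. r k))"
proof (induction N)
  case (Suc N)
  define R where "R n = (\<Sum>k\<le>n. r k)" for n
  have "(\<Sum>j<Suc N. R (Suc N) - R j) = (\<Sum>j<N. (R N - R j) + r (Suc N)) + (R (Suc N) - R N)"
    by (simp add: R_def algebra_simps)
  also have "\<dots> = (\<Sum>j<N. R N - R j) + real N * r (Suc N) + r (Suc N)"
    by (simp add: sum.distrib R_def)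
  finally show ?case using Suc by (simp add: R_def algebra_simps)
qed simp

locale renewal_equation =
  fixes r u :: "nat \<Rightarrow> real" and c q :: real
  assumes c_pos: "0 < c" and q_pos: "0 < q" and q_less_1: "q < 1"
    and r_nonneg: "\<And>k. 0 \<le> r k"
    and u_ge: "\<And>m. c \<le> u m"
    and u_antimono: "\<And>m k. u (m + k) \<le> u m"
    and u_diff_le: "\<And>m k. u m - u (m + k) \<le> q ^ Suc m / (1 - q)"
    and renewal: "\<And>j. (\<Sum>k\<le>j. r k * u (j - k)) = 1"
begin

lemma sum_r_le: "(\<Sum>k\<le>N. r k) \<le> 1 / c"
proof -
  have "c * (\<Sum>k\<le>N. r k) = (\<Sum>k\<le>N. r k * c)" by (simp add: sum_distrib_left mult.commute)
  also have "\<dots> \<le> (\<Sum>k\<le>N. r k * u (N - k))" by (intro sum_mono mult_left_mono u_ge r_nonneg)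
  finally show ?thesis using renewal[of N] c_pos by (simp add: field_simps)
qed

lemma tail_le_convolution:
  assumes "j \<le> N"
  shows "c * ((\<Sum>k\<le>N. r k) - (\<Sum>k\<le>j. r k)) \<le> (\<Sum>k\<le>j. r k * q ^ Suc (j - k)) / (1 - q)"
proof -
  \<comment> \<open>compare the renewal equations at \<open>N\<close> and at \<open>j\<close>, using \<open>u\<^sub>N\<^sub>-\<^sub>k \<ge> u\<^sub>N\<close> and \<open>u\<^sub>j\<^sub>-\<^sub>k \<le> u\<^sub>N + q\<^sup>j\<^sup>-\<^sup>k\<^sup>+\<^sup>1/(1-q)\<close>\<close>
  have "u N * (\<Sum>k\<le>N. r k) = (\<Sum>k\<le>N. r k * u N)" by (simp add: sum_distrib_left mult.commute)
  also have "\<dots> \<le> (\<Sum>k\<le>N. r k * u (N - k))"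
    using u_antimono by (intro sum_mono mult_left_mono r_nonneg) (metis atMost_iff le_add_diff_inverse2)
  also have "\<dots> = (\<Sum>k\<le>j. r k * u (j - k))" by (simp only: renewal)
  also have "\<dots> \<le> (\<Sum>k\<le>j. r k * (u N + q ^ Suc (j - k) / (1 - q)))"
  proof (intro sum_mono mult_left_mono r_nonneg)
    fix k assume "k \<in> {..j}"
    then have "(j - k) + (N - j + k) = N" using assms by auto
    then show "u (j - k) \<le> u N + q ^ Suc (j - k) / (1 - q)"
      using u_diff_le[of "j - k" "N - j + k"] by simp
  qed
  also have "\<dots> = u N * (\<Sum>k\<le>j. r k) + (\<Sum>k\<le>j. r k * q ^ Suc (j - k)) / (1 - q)"
    by (simp add: distrib_left sum.distrib sum_distrib_left sum_divide_distrib mult.commute)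
  finally have "u N * ((\<Sum>k\<le>N. r k) - (\<Sum>k\<le>j. r k)) \<le> (\<Sum>k\<le>j. r k * q ^ Suc (j - k)) / (1 - q)"
    by (simp add: algebra_simps)
  moreover have "(\<Sum>k\<le>j. r k) \<le> (\<Sum>k\<le>N. r k)" using assms by (intro sum_mono2 r_nonneg) auto
  ultimately show ?thesis using u_ge[of N] by (smt (verit) mult_right_mono)
qed

lemma sum_convolution_le:
  "(1 - q) * (\<Sum>j<N. \<Sum>k\<le>j. r k * q ^ Suc (j - k)) \<le> q * (\<Sum>k\<le>N. r k)"
proof -
  define g where "g j = (\<Sum>k\<le>j. r k * q ^ Suc (j - k))" for j
  have g_Suc: "g (Suc j) = q * (g j + r (Suc j))" for j
  proof -
    have "(\<Sum>k\<le>j. r k * q ^ Suc (Suc j - k)) = q * g j"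
      unfolding g_def sum_distrib_left by (intro sum.cong refl) (simp add: Suc_diff_le)
    then show ?thesis by (simp add: g_def algebra_simps)
  qed
  have "(1 - q) * (\<Sum>j<N. g j) + g N = q * (\<Sum>k\<le>N. r k)"
  proof (induction N)
    case (Suc N)
    have "(1 - q) * (\<Sum>j<Suc N. g j) + g (Suc N) = (1 - q) * (\<Sum>j<N. g j) + g N + q * r (Suc N)"
      by (simp add: g_Suc algebra_simps)
    also have "\<dots> = q * (\<Sum>k\<le>N. r k) + q * r (Suc N)" using Suc by simp
    finally show ?case by (simp add: algebra_simps)
  qed (simp add: g_def)
  moreover have "0 \<le> g N" unfolding g_def using q_pos by (intro sum_nonneg mult_nonneg_nonneg r_nonneg) auto
  ultimately show ?thesis unfolding g_def by linarith
qed

lemma first_moment_le: "(\<Sum>k\<le>N. real k * r k) \<le> q / ((1 - q)^2 * c^2)"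
proof -
  have "c * (\<Sum>k\<le>N. real k * r k) = (\<Sum>j<N. c * ((\<Sum>k\<le>N. r k) - (\<Sum>k\<le>j. r k)))"
    by (simp add: sum_of_index_weighted_eq_sum_of_tails sum_distrib_left)
  also have "\<dots> \<le> (\<Sum>j<N. (\<Sum>k\<le>j. r k * q ^ Suc (j - k)) / (1 - q))"
    by (intro sum_mono tail_le_convolution) simp
  also have "\<dots> = (\<Sum>j<N. \<Sum>k\<le>j. r k * q ^ Suc (j - k)) / (1 - q)"
    by (simp only: sum_divide_distrib)
  also have "\<dots> \<le> q * (1 / c) / (1 - q) / (1 - q)"
  proof -
    have "(1 - q) * (\<Sum>j<N. \<Sum>k\<le>j. r k * q ^ Suc (j - k)) \<le> q * (1 / c)"
      using sum_convolution_le[of N] sum_r_le[of N] q_pos by (meson mult_left_mono less_imp_le order.trans)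
    then have "(\<Sum>j<N. \<Sum>k\<le>j. r k * q ^ Suc (j - k)) \<le> q * (1 / c) / (1 - q)"
      using q_less_1 by (subst pos_le_divide_eq) (auto simp: mult.commute simp del: power_Suc)
    then show ?thesis using q_less_1 by (intro divide_right_mono) auto
  qed
  finally have "(\<Sum>k\<le>N. real k * r k) \<le> q * (1 / c) / (1 - q) / (1 - q) / c"
    by (subst pos_le_divide_eq[OF c_pos]) (simp add: mult.commute)
  also have "\<dots> = q / ((1 - q)^2 * c^2)" by (simp add: power2_eq_square)
  finally show ?thesis .
qed

end

lemma sum_odd_eq_square: "(\<Sum>k<n. real (2 * k + 1)) = real n ^ 2"
  by (induction n) (auto simp: power2_eq_square algebra_simps)

lemma AE_witness:
  assumes "AE x in M. P x" "A \<in> sets M" "emeasure M A \<noteq> 0"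
  shows "\<exists>x\<in>A. P x"
proof (rule ccontr)
  assume "\<not> (\<exists>x\<in>A. P x)"
  then have "AE x in M. x \<notin> A" using assms(1) by (auto elim: AE_mp)
  then have "emeasure M {x \<in> space M. x \<in> A} = 0" by (rule emeasure_eq_0_AE)
  moreover have "{x \<in> space M. x \<in> A} = A" using sets.sets_into_space[OF assms(2)] by auto
  ultimately show False using assms(3) by simp
qed

lemma (in prob_space) AE_eq_expectation_if_variance_eq_0:
  fixes f :: "'a \<Rightarrow> real"
  assumes "random_variable borel f" "integrable M (\<lambda>x. f x ^ 2)" "variance f = 0"
  shows "AE x in M. f x = expectation f"
proof -
  have "integrable M f" using assms(1,2) by (rule square_integrable_imp_integrable)
  then have "integrable M (\<lambda>x. (f x - expectation f)\<^sup>2)"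
    using assms(2) unfolding power2_eq_square ring_distribs
    by (intro Bochner_Integration.integrable_diff) auto
  then have "AE x in M. (f x - expectation f)\<^sup>2 = 0"
    using integral_nonneg_eq_0_iff_AE[of M "\<lambda>x. (f x - expectation f)\<^sup>2"] assms(3) by simp
  then show ?thesis by simp
qed

lemma eq_0_if_const_affine_combination:
  fixes b :: "nat \<Rightarrow> real"
  assumes const: "\<And>n. 1 \<le> n \<Longrightarrow> b n * x - real n * y = c"
    and vanish: "\<And>n. l < n \<Longrightarrow> b n = 0" and "x \<noteq> 0" "1 \<le> n"
  shows "b n = 0"
proof -
  \<comment> \<open>beyond \<open>l\<close> the left-hand side is \<open>-n y\<close>, which is constant only for \<open>y = 0\<close>\<close>
  have "- (real l + 1) * y = c"
    using const[of "l + 1"] vanish[of "l + 1"] by (simp add: algebra_simps)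
  moreover have "- (real l + 2) * y = c"
    using const[of "l + 2"] vanish[of "l + 2"] by (simp add: algebra_simps)
  ultimately have "(real l + 2) * y - (real l + 1) * y = 0" by linarith
  then have "y = 0" by (simp add: algebra_simps)
  with \<open>- (real l + 1) * y = c\<close> have "c = 0" by simp
  then show ?thesis using const[OF \<open>1 \<le> n\<close>] \<open>x \<noteq> 0\<close> \<open>y = 0\<close> by simp
qed

lemma exp_neg_le_one_minus:
  fixes x q :: real
  assumes "0 \<le> x" "x \<le> q" "q < 1"
  shows "exp (- x / (1 - q)) \<le> 1 - x"
proof -
  have "ln (1 / (1 - x)) \<le> 1 / (1 - x) - 1" using assms by (intro ln_le_minus_one) simp
  also have "\<dots> = x / (1 - x)" using assms by (simp add: field_simps)
  also have "\<dots> \<le> x / (1 - q)" using assms by (intro divide_left_mono) auto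
  finally have "- x / (1 - q) \<le> ln (1 - x)" using assms by (simp add: ln_div)
  then show ?thesis using assms by (metis diff_gt_0_iff_gt exp_le_cancel_iff exp_ln order.strict_trans1)
qed

locale mallows_sample =
  fixes q :: real
  assumes q_pos: "0 < q" and q_less_1: "q < 1"
begin

definition q_pochhammer :: "nat \<Rightarrow> real" where
  "q_pochhammer m = (\<Prod>i\<in>{1..m}. 1 - q ^ i)"

lemma power_q_le_1: "q ^ k \<le> 1"
  using q_pos q_less_1 by (intro power_le_one) auto

lemma q_pochhammer_Suc: "q_pochhammer (Suc m) = q_pochhammer m * (1 - q ^ Suc m)"
  unfolding q_pochhammer_def by (simp add: prod.cl_ivl_Suc)

lemma q_pochhammer_nonneg: "0 \<le> q_pochhammer m"
  unfolding q_pochhammer_def using power_q_le_1 by (intro prod_nonneg) (simp add: diff_ge_0_iff_ge)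

lemma q_pochhammer_le_1: "q_pochhammer m \<le> 1"
  unfolding q_pochhammer_def using power_q_le_1 q_pos by (intro prod_le_1) auto

lemma q_pochhammer_antimono: "q_pochhammer (m + k) \<le> q_pochhammer m"
proof (induction k)
  case (Suc k)
  have "q_pochhammer (m + Suc k) = q_pochhammer (m + k) * (1 - q ^ Suc (m + k))"
    by (simp add: q_pochhammer_Suc)
  also have "\<dots> \<le> q_pochhammer (m + k)"
    using q_pochhammer_nonneg q_pos by (simp add: mult_left_le)
  finally show ?case using Suc by simp
qed simp

lemma q_pochhammer_diff_le: "q_pochhammer m - q_pochhammer (m + k) \<le> q ^ Suc m / (1 - q)"
proof -
  have "q_pochhammer m - q_pochhammer (m + k) \<le> q ^ Suc m * (1 - q ^ k) / (1 - q)"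
  proof (induction k)
    case (Suc k)
    have "q_pochhammer m - q_pochhammer (m + Suc k) =
        (q_pochhammer m - q_pochhammer (m + k)) + q_pochhammer (m + k) * q ^ Suc (m + k)"
      by (simp add: q_pochhammer_Suc algebra_simps)
    also have "\<dots> \<le> q ^ Suc m * (1 - q ^ k) / (1 - q) + q ^ Suc (m + k)"
      using Suc q_pochhammer_le_1 q_pochhammer_nonneg q_pos
      by (intro add_mono mult_left_le_one_le) (auto simp del: power_Suc)
    also have "\<dots> = q ^ Suc m * (1 - q ^ Suc k) / (1 - q)"
      using q_less_1 by (simp add: field_simps power_add)
    finally show ?case .
  qed simp
  also have "\<dots> \<le> q ^ Suc m / (1 - q)"
    using q_pos q_less_1 by (intro divide_right_mono mult_left_le) (auto simp del: power_Suc)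
  finally show ?thesis .
qed

lemma q_pochhammer_ge: "exp (- q / (1 - q)^2) \<le> q_pochhammer m"
proof -
  have "exp (- (\<Sum>i\<in>{1..m}. q ^ i) / (1 - q)) \<le> q_pochhammer m"
  proof (induction m)
    case (Suc m)
    have "exp (- (\<Sum>i\<in>{1..Suc m}. q ^ i) / (1 - q)) =
        exp (- (\<Sum>i\<in>{1..m}. q ^ i) / (1 - q)) * exp (- (q ^ Suc m) / (1 - q))"
      by (simp add: sum.cl_ivl_Suc exp_add[symmetric] diff_divide_distrib add_divide_distrib
          del: power_Suc)
    also have "\<dots> \<le> q_pochhammer m * (1 - q ^ Suc m)"
    proof (rule mult_mono)
      show "exp (- (q ^ Suc m) / (1 - q)) \<le> 1 - q ^ Suc m"
        using q_pos q_less_1 power_q_le_1[of m] by (intro exp_neg_le_one_minus) (auto simp: mult_left_le)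
    qed (use Suc q_pochhammer_nonneg in auto)
    finally show ?case by (simp add: q_pochhammer_Suc)
  qed (simp add: q_pochhammer_def)
  moreover have "- q / (1 - q)^2 \<le> - (\<Sum>i\<in>{1..m}. q ^ i) / (1 - q)"
  proof -
    have "(\<Sum>i\<in>{1..m}. q ^ i) = q * (1 - q ^ m) / (1 - q)"
    proof (induction m)
      case (Suc m)
      then have "(\<Sum>i\<in>{1..Suc m}. q ^ i) = q * (1 - q ^ m) / (1 - q) + q ^ Suc m"
        by (simp add: sum.cl_ivl_Suc)
      also have "\<dots> = q * (1 - q ^ Suc m) / (1 - q)" using q_less_1 by (simp add: field_simps)
      finally show ?case .
    qed simp
    also have "\<dots> \<le> q / (1 - q)"
      using q_pos q_less_1 power_q_le_1 by (intro divide_right_mono) (auto simp: mult_left_le)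
    finally have "(\<Sum>i\<in>{1..m}. q ^ i) / (1 - q) \<le> q / (1 - q) / (1 - q)"
      using q_less_1 by (intro divide_right_mono) auto
    then show ?thesis by (simp add: power2_eq_square)
  qed
  ultimately show ?thesis by (meson exp_le_cancel_iff order_trans)
qed

end

sublocale mallows_sample \<subseteq> sequence_space "measure_pmf (geometric_pmf (1 - q))"
  unfolding sequence_space_def product_prob_space_def product_prob_space_axioms_def
    product_sigma_finite_def
  by (simp add: prob_space_measure_pmf prob_space_imp_sigma_finite)

definition never_closed :: "(nat \<Rightarrow> nat) \<Rightarrow> nat \<Rightarrow> bool" where
  "never_closed w k \<longleftrightarrow> (\<forall>j\<in>{1..k}. \<not> closed_at w j)"

lemma closed_at_cong: "(\<And>i. i \<le> j \<Longrightarrow> w i = w' i) \<Longrightarrow> closed_at w j \<longleftrightarrow> closed_at w' j"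
  unfolding closed_at_def by (intro ball_cong refl) auto

lemma never_closed_cong:
  "(\<And>i. i \<le> k \<Longrightarrow> w i = w' i) \<Longrightarrow> never_closed w k \<longleftrightarrow> never_closed w' k"
  unfolding never_closed_def by (intro ball_cong refl arg_cong[where f=Not] closed_at_cong) auto

lemma never_closed_if_less_first_block: "k < first_block w \<Longrightarrow> never_closed w k"
  unfolding never_closed_def using first_block_le by fastforce

context mallows_sample
begin

lemma mallows_space_eq: "mallows_space q = S"
  by (simp add: mallows_space_def)

lemma space_S [simp]: "space S = UNIV"
  by (auto simp: space_PiM PiE_def extensional_def)

lemma measurable_coordinate [measurable]: "(\<lambda>w. w i) \<in> measurable S (count_space UNIV)"
proof -
  have "(\<lambda>w. w i) \<in> measurable S (measure_pmf (geometric_pmf (1 - q)))"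
    by (rule measurable_component_singleton) simp
  then show ?thesis by (simp cong: measurable_cong_sets)
qed

text \<open>A function of the first \<open>n + 1\<close> coordinates factors through the countable space
  of lists, on which every function is measurable.\<close>

lemma measurable_finite_dependence:
  assumes dep: "\<And>w w'. (\<And>i. i \<le> n \<Longrightarrow> w i = w' i) \<Longrightarrow> f w = f w'"
    and N: "space N = UNIV"
  shows "f \<in> measurable S N"
proof -
  define enc where "enc w = map w [0..<Suc n]" for w :: "nat \<Rightarrow> nat"
  define dec where "dec xs = (\<lambda>i. if i < length xs then xs ! i else 0)" for xs :: "nat list"
  have enc_nth: "i \<le> n \<Longrightarrow> enc w ! i = w i" for w i
    by (simp add: enc_def nth_map_upt del: upt_Suc)
  have enc_meas: "enc \<in> measurable S (count_space UNIV)"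
    unfolding measurable_count_space_eq2_countable
  proof (intro conjI ballI)
    fix xs :: "nat list"
    show "enc -` {xs} \<inter> space S \<in> sets S"
    proof (cases "length xs = Suc n")
      case True
      have "enc w = xs \<longleftrightarrow> (\<forall>i\<in>{..n}. w i = xs ! i)" for w
        using True enc_nth by (auto simp: enc_def intro!: nth_equalityI simp del: upt_Suc)
      then have "enc -` {xs} \<inter> space S = (\<Inter>i\<in>{..n}. (\<lambda>w. w i) -` {xs ! i} \<inter> space S)"
        by auto
      also have "\<dots> \<in> sets S"
        by (intro sets.finite_INT measurable_sets[OF measurable_coordinate]) auto
      finally show ?thesis .
    next
      case False
      then have "enc -` {xs} \<inter> space S = {}" by (auto simp: enc_def)
      then show ?thesis by simp
    qed
  qed simp
  have "(\<lambda>xs. f (dec xs)) \<in> measurable (count_space UNIV) N"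
    using N by (simp add: measurable_count_space_eq1)
  then have "(\<lambda>w. f (dec (enc w))) \<in> measurable S N"
    by (rule measurable_compose[OF enc_meas])
  moreover have "f (dec (enc w)) = f w" for w
    by (rule dep) (simp add: dec_def enc_nth, simp add: enc_def)
  ultimately show ?thesis by simp
qed

lemma sets_Collect_finite_dependence:
  assumes "\<And>w w'. (\<And>i. i \<le> n \<Longrightarrow> w i = w' i) \<Longrightarrow> P w \<longleftrightarrow> P w'"
  shows "{w. P w} \<in> sets S"
proof -
  have "P \<in> measurable S (count_space UNIV)"
  proof (rule measurable_finite_dependence[of n])
    fix w w' :: "nat \<Rightarrow> nat" assume "\<And>i. i \<le> n \<Longrightarrow> w i = w' i"
    then show "P w = P w'" by (rule assms)
  qed simp
  then show ?thesis using measurable_sets[of P S "count_space UNIV" "{True}"] by (simp add: vimage_def)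
qed

lemma sets_closed_at: "{w. closed_at w m} \<in> sets S"
  by (rule sets_Collect_finite_dependence[of m]) (simp add: closed_at_def)

lemma sets_never_closed: "{w. never_closed w k} \<in> sets S"
  by (rule sets_Collect_finite_dependence[of k]) (simp add: never_closed_def closed_at_def)

lemma measurable_first_block [measurable]: "first_block \<in> measurable S (count_space UNIV)"
  unfolding first_block_eq_Least_closed_at[abs_def]
proof (rule measurable_Least)
  fix j
  show "(\<lambda>w. 1 \<le> j \<and> closed_at w j) \<in> measurable S (count_space UNIV)"
    by (rule measurable_finite_dependence[of j]) (auto simp: closed_at_def)
qed

lemma measurable_first_block_functional:
  assumes "space N = UNIV"
  shows "(\<lambda>w. F (first_block w) (first_block_perm w)) \<in> measurable S N"
proof -
  have "(\<lambda>w. F n (\<lambda>x. if x \<in> {1..n} then mallows_perm w x else x)) \<in> measurable S N" for n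
  proof (rule measurable_finite_dependence[OF _ assms])
    fix w w' :: "nat \<Rightarrow> nat" assume "\<And>i. i \<le> n \<Longrightarrow> w i = w' i"
    then have "mallows_list w x = mallows_list w' x" if "x \<in> {1..n}" for x
      using that by (intro mallows_list_cong) auto
    then have "(\<lambda>x. if x \<in> {1..n} then mallows_perm w x else x) =
        (\<lambda>x. if x \<in> {1..n} then mallows_perm w' x else x)"
      by (auto simp: mallows_perm_def)
    then show "F n (\<lambda>x. if x \<in> {1..n} then mallows_perm w x else x) =
        F n (\<lambda>x. if x \<in> {1..n} then mallows_perm w' x else x)"
      by simp
  qed
  then show ?thesis
    unfolding first_block_perm_def[abs_def] by (rule measurable_compose_countable[OF _ measurable_first_block])
qed

lemma emeasure_geometric_atMost:
  "emeasure (measure_pmf (geometric_pmf (1 - q))) {..k} = ennreal (1 - q ^ Suc k)"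
proof -
  have "measure_pmf.prob (geometric_pmf (1 - q)) {..k} = (\<Sum>n\<le>k. q ^ n * (1 - q))"
    using q_pos q_less_1 by (simp add: measure_measure_pmf_finite pmf_geometric)
  also have "\<dots> = 1 - q ^ Suc k"
    by (induction k) (simp_all add: algebra_simps)
  finally show ?thesis by (simp add: measure_pmf.emeasure_eq_measure)
qed

lemma prob_closed_at: "prob {w. closed_at w m} = q_pochhammer m"
proof -
  have "{w. closed_at w m} = {w \<in> space S. \<forall>i\<in>{1..m}. w i \<in> {..m - i}}"
    unfolding closed_at_def by (auto simp: le_diff_conv2 add.commute)
  then have "emeasure S {w. closed_at w m} =
      (\<Prod>i\<in>{1..m}. emeasure (measure_pmf (geometric_pmf (1 - q))) {..m - i})"
    by (simp only:) (rule emeasure_PiM_Collect; simp)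
  also have "\<dots> = ennreal (\<Prod>i\<in>{1..m}. 1 - q ^ Suc (m - i))"
    using power_q_le_1 by (simp add: emeasure_geometric_atMost prod_ennreal del: power_Suc)
  finally have "prob {w. closed_at w m} = (\<Prod>i\<in>{1..m}. 1 - q ^ Suc (m - i))"
    using power_q_le_1 by (simp add: P.emeasure_eq_measure prod_nonneg del: power_Suc)
  also have "\<dots> = q_pochhammer m"
    unfolding q_pochhammer_def
    by (subst prod.atLeastAtMost_rev) (intro prod.cong refl, auto simp: Suc_diff_le)
  finally show ?thesis .
qed

lemma emeasure_case_nat_vimage:
  assumes B: "B \<in> sets S"
    and indep_0: "\<And>w w'. (\<And>i. 0 < i \<Longrightarrow> w i = w' i) \<Longrightarrow> w \<in> B \<longleftrightarrow> w' \<in> B"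
  shows "{w. case_nat s w \<in> B} \<in> sets S" and "emeasure S {w. case_nat s w \<in> B} = emeasure S B"
proof -
  let ?G = "measure_pmf (geometric_pmf (1 - q))"
  define g where "g = (\<lambda>(s, w). case_nat s (w :: nat \<Rightarrow> nat))"
  have g: "g \<in> measurable (?G \<Otimes>\<^sub>M S) S"
    unfolding g_def by measurable
  have "(\<lambda>w. case_nat s w) -` B \<inter> space S \<in> sets S"
    by (rule measurable_sets[OF _ B]) (rule measurable_case_nat'; simp)
  then show sets: "{w. case_nat s w \<in> B} \<in> sets S" by (simp add: vimage_def)
  have "g (s', w) \<in> B \<longleftrightarrow> case_nat s w \<in> B" for s' w
    unfolding g_def by (rule indep_0) (simp split: nat.split)
  then have vimage: "g -` B \<inter> space (?G \<Otimes>\<^sub>M S) = UNIV \<times> {w. case_nat s w \<in> B}"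
    by (auto simp: space_pair_measure)
  have "emeasure S B = emeasure (distr (?G \<Otimes>\<^sub>M S) S g) B"
    unfolding g_def by (simp add: PiM_iter)
  also have "\<dots> = emeasure (?G \<Otimes>\<^sub>M S) (UNIV \<times> {w. case_nat s w \<in> B})"
    by (simp add: emeasure_distr[OF g B] vimage)
  also have "\<dots> = emeasure S {w. case_nat s w \<in> B}"
    using measure_pmf.emeasure_space_1[of "geometric_pmf (1 - q)"]
    by (simp add: P.emeasure_pair_measure_Times sets)
  finally show "emeasure S {w. case_nat s w \<in> B} = emeasure S B" ..
qed

lemma emeasure_prefix_and_shift:
  assumes A: "A \<in> sets S" and B: "B \<in> sets S"
    and A_dep: "\<And>w w'. (\<And>i. i \<le> m \<Longrightarrow> w i = w' i) \<Longrightarrow> w \<in> A \<longleftrightarrow> w' \<in> A"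
    and B_dep: "\<And>w w'. (\<And>i. 0 < i \<Longrightarrow> w i = w' i) \<Longrightarrow> w \<in> B \<longleftrightarrow> w' \<in> B"
  shows "emeasure S {w. w \<in> A \<and> (\<lambda>i. w (m + i)) \<in> B} = emeasure S A * emeasure S B"
proof -
  define f where "f = (\<lambda>(x, y). comb_seq (Suc m) x (y :: nat \<Rightarrow> nat))"
  define E where "E = {w. w \<in> A \<and> (\<lambda>i. w (m + i)) \<in> B}"
  have f: "f \<in> measurable (S \<Otimes>\<^sub>M S) S" unfolding f_def by (rule measurable_comb_seq)
  have "(\<lambda>w i. w (m + i)) -` B \<inter> space S \<in> sets S"
    by (rule measurable_sets[OF _ B]) (rule measurable_PiM_single'; simp add: space_PiM)
  moreover have "E = A \<inter> ((\<lambda>w i. w (m + i)) -` B \<inter> space S)" unfolding E_def by auto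
  ultimately have E: "E \<in> sets S" using A by simp
  have "f (x, y) \<in> E \<longleftrightarrow> x \<in> A \<and> case_nat 0 y \<in> B" for x y
  proof -
    have "f (x, y) \<in> A \<longleftrightarrow> x \<in> A" by (rule A_dep) (simp add: f_def comb_seq_def)
    moreover have "(\<lambda>i. f (x, y) (m + i)) = case_nat (x m) y"
      by (rule ext) (simp add: f_def comb_seq_def split: nat.split)
    moreover have "case_nat (x m) y \<in> B \<longleftrightarrow> case_nat 0 y \<in> B"
      by (rule B_dep) (simp split: nat.split)
    ultimately show ?thesis by (simp add: E_def)
  qed
  then have vimage: "f -` E \<inter> space (S \<Otimes>\<^sub>M S) = A \<times> {y. case_nat 0 y \<in> B}"
    by (auto simp: space_pair_measure)
  have "emeasure S E = emeasure (distr (S \<Otimes>\<^sub>M S) S f) E"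
    unfolding f_def by (simp add: PiM_comb_seq)
  also have "\<dots> = emeasure S A * emeasure S {y. case_nat 0 y \<in> B}"
    by (simp add: emeasure_distr[OF f E] vimage P.emeasure_pair_measure_Times A
        emeasure_case_nat_vimage(1)[OF B B_dep])
  finally show ?thesis by (simp add: E_def emeasure_case_nat_vimage(2)[OF B B_dep])
qed

lemma prob_closed_at_and_shift_never_closed:
  "prob {w. closed_at w m \<and> never_closed (\<lambda>i. w (m + i)) k} =
   prob {w. closed_at w m} * prob {w. never_closed w k}"
proof -
  have "emeasure S {w. w \<in> {w. closed_at w m} \<and> (\<lambda>i. w (m + i)) \<in> {w. never_closed w k}} =
      emeasure S {w. closed_at w m} * emeasure S {w. never_closed w k}"
    by (rule emeasure_prefix_and_shift[OF sets_closed_at sets_never_closed])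
      (auto simp: closed_at_def never_closed_def)
  then show ?thesis by (simp add: P.emeasure_eq_measure ennreal_mult'[symmetric])
qed

text \<open>Every sample has a last closure time \<open>m \<le> j\<close>, after which the shifted sample does
  not close up to \<open>j - m\<close>.\<close>

lemma renewal_equation_never_closed:
  "(\<Sum>m\<le>j. prob {w. closed_at w m} * prob {w. never_closed w (j - m)}) = 1"
proof -
  define F where "F m = {w. closed_at w m \<and> never_closed (\<lambda>i. w (m + i)) (j - m)}" for m
  have F_sets: "F m \<in> sets S" if "m \<le> j" for m
    unfolding F_def
  proof (rule sets_Collect_finite_dependence[of j])
    fix w w' :: "nat \<Rightarrow> nat" assume "\<And>i. i \<le> j \<Longrightarrow> w i = w' i"
    then show "(closed_at w m \<and> never_closed (\<lambda>i. w (m + i)) (j - m)) \<longleftrightarrow>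
        (closed_at w' m \<and> never_closed (\<lambda>i. w' (m + i)) (j - m))"
      using that closed_at_cong[of m w w'] never_closed_cong[of "j - m" "\<lambda>i. w (m + i)" "\<lambda>i. w' (m + i)"]
      by simp
  qed
  have "w \<in> (\<Union>m\<le>j. F m)" for w
  proof -
    define T where "T = {t. t \<le> j \<and> closed_at w t}"
    define m where "m = Max T"
    have T: "finite T" "0 \<in> T" unfolding T_def by (auto simp: closed_at_def)
    then have "m \<in> T" unfolding m_def by (intro Max_in) auto
    then have m: "m \<le> j" "closed_at w m" unfolding T_def by auto
    have "\<not> closed_at (\<lambda>i. w (m + i)) k" if "k \<in> {1..j - m}" for k
    proof
      assume "closed_at (\<lambda>i. w (m + i)) k"
      then have "m + k \<in> T" using closed_at_add_iff[OF m(2)] that unfolding T_def by auto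
      then show False using Max_ge[OF T(1), of "m + k"] that unfolding m_def by auto
    qed
    then show ?thesis using m by (auto simp: F_def never_closed_def)
  qed
  then have cover: "(\<Union>m\<le>j. F m) = UNIV" by auto
  have "F m \<inter> F m' = {}" if "m < m'" "m' \<le> j" for m m'
  proof -
    have "closed_at (\<lambda>i. w (m + i)) (m' - m)" if "closed_at w m" "closed_at w m'" for w
      using closed_at_add_iff[OF that(1), of "m' - m"] that \<open>m < m'\<close> by simp
    then show ?thesis using that by (fastforce simp: F_def never_closed_def)
  qed
  then have "disjoint_family_on F {..j}"
    unfolding disjoint_family_on_def by (metis Int_commute linorder_neqE_nat atMost_iff)
  then have "prob (\<Union>m\<le>j. F m) = (\<Sum>m\<le>j. prob (F m))"
    using F_sets by (intro measure_finite_Union) auto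
  then have "1 = (\<Sum>m\<le>j. prob (F m))" using cover P.prob_space by simp
  also have "\<dots> = (\<Sum>m\<le>j. prob {w. closed_at w m} * prob {w. never_closed w (j - m)})"
    unfolding F_def by (simp add: prob_closed_at_and_shift_never_closed)
  finally show ?thesis ..
qed

end

sublocale mallows_sample \<subseteq> renewal: renewal_equation "\<lambda>k. prob {w. never_closed w k}"
  q_pochhammer "exp (- q / (1 - q)^2)" q
proof
  fix j
  have "(\<Sum>k\<le>j. prob {w. never_closed w k} * q_pochhammer (j - k)) =
      (\<Sum>m\<le>j. q_pochhammer m * prob {w. never_closed w (j - m)})"
    by (subst (2) sum.atLeastAtMost_rev[of _ 0, simplified atLeast0AtMost]) (simp add: atLeast0AtMost mult.commute)
  then show "(\<Sum>k\<le>j. prob {w. never_closed w k} * q_pochhammer (j - k)) = 1"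
    using renewal_equation_never_closed[of j] by (simp add: prob_closed_at)
qed (use q_pos q_less_1 q_pochhammer_ge q_pochhammer_antimono q_pochhammer_diff_le in auto)

context mallows_sample
begin

lemma summable_odd_never_closed: "summable (\<lambda>k. real (2 * k + 1) * prob {w. never_closed w k})"
proof (rule summableI_nonneg_bounded)
  fix n
  have "(\<Sum>k<n. real (2 * k + 1) * prob {w. never_closed w k}) \<le>
      (\<Sum>k\<le>n. real (2 * k + 1) * prob {w. never_closed w k})"
    by (intro sum_mono2) auto
  also have "\<dots> = 2 * (\<Sum>k\<le>n. real k * prob {w. never_closed w k}) + (\<Sum>k\<le>n. prob {w. never_closed w k})"
    by (simp add: sum.distrib sum_distrib_left algebra_simps)
  finally show "(\<Sum>k<n. real (2 * k + 1) * prob {w. never_closed w k}) \<le>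
      2 * (q / ((1 - q)^2 * exp (- q / (1 - q)^2)^2)) + 1 / exp (- q / (1 - q)^2)"
    using renewal.first_moment_le[of n] renewal.sum_r_le[of n] by linarith
qed simp

lemma integrable_first_block_sq: "integrable S (\<lambda>w. real (first_block w) ^ 2)"
proof -
  have sets: "{w. k < first_block w} \<in> sets S" for k
    using measurable_sets[OF measurable_first_block, of "{k<..}"] by (simp add: vimage_def)
  define f where "f k w = ennreal (real (2 * k + 1)) * indicator {w. k < first_block w} w" for k w
  have pointwise: "ennreal (real (first_block w) ^ 2) = (\<Sum>k. f k w)" for w
  proof -
    have "(\<Sum>k. f k w) = (\<Sum>k<first_block w. ennreal (real (2 * k + 1)))"
      by (subst suminf_finite[of "{..<first_block w}"]) (auto simp: f_def)
    also have "\<dots> = ennreal (real (first_block w) ^ 2)"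
      by (subst sum_ennreal) (simp_all only: sum_odd_eq_square of_nat_0_le_iff)
    finally show ?thesis ..
  qed
  have "(\<integral>\<^sup>+ w. ennreal (real (first_block w) ^ 2) \<partial>S) = (\<integral>\<^sup>+ w. (\<Sum>k. f k w) \<partial>S)"
    by (simp only: pointwise)
  also have "\<dots> = (\<Sum>k. integral\<^sup>N S (f k))"
    by (rule nn_integral_suminf) (use sets in \<open>auto simp: f_def\<close>)
  also have "\<dots> \<le> (\<Sum>k. ennreal (real (2 * k + 1) * prob {w. never_closed w k}))"
  proof (intro suminf_le allI)
    fix k
    have "integral\<^sup>N S (f k) = ennreal (real (2 * k + 1)) * emeasure S {w. k < first_block w}"
      unfolding f_def by (rule nn_integral_cmult_indicator[OF sets])
    also have "\<dots> \<le> ennreal (real (2 * k + 1)) * emeasure S {w. never_closed w k}"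
      by (intro mult_left_mono emeasure_mono) (auto simp: never_closed_if_less_first_block sets_never_closed)
    finally show "integral\<^sup>N S (f k) \<le> ennreal (real (2 * k + 1) * prob {w. never_closed w k})"
      by (simp add: P.emeasure_eq_measure ennreal_mult)
  qed auto
  also have "\<dots> < \<infinity>"
    using summable_odd_never_closed by (simp add: suminf_ennreal2 del: of_nat_Suc)
  finally show ?thesis
    by (simp add: integrable_iff_bounded measurable_compose[OF measurable_first_block])
qed

lemma sets_cyclic_block: "cyclic_block n \<in> sets S"
  unfolding cyclic_block_def by (rule sets_Collect_finite_dependence[of n]) simp

lemma emeasure_cyclic_block_ne_0: "1 \<le> n \<Longrightarrow> emeasure S (cyclic_block n) \<noteq> 0"
proof -
  assume "1 \<le> n"
  define z where "z i = (if i < n then 1 else (0::nat))" for i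
  have "cyclic_block n = {w \<in> space S. \<forall>i\<in>{1..n}. w i \<in> {z i}}"
    using \<open>1 \<le> n\<close> by (auto simp: cyclic_block_def z_def)
  then have "emeasure S (cyclic_block n) =
      (\<Prod>i\<in>{1..n}. emeasure (measure_pmf (geometric_pmf (1 - q))) {z i})"
    by (simp only:) (rule emeasure_PiM_Collect; simp)
  also have "\<dots> = ennreal (\<Prod>i\<in>{1..n}. pmf (geometric_pmf (1 - q)) (z i))"
    by (simp add: emeasure_pmf_single prod_ennreal)
  also have "(\<Prod>i\<in>{1..n}. pmf (geometric_pmf (1 - q)) (z i)) > 0"
    using q_pos q_less_1 by (intro prod_pos) (simp add: pmf_geometric)
  then have "ennreal (\<Prod>i\<in>{1..n}. pmf (geometric_pmf (1 - q)) (z i)) \<noteq> 0"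
    by (subst ennreal_eq_0_iff) simp
  finally show ?thesis .
qed

lemma integrable_sq_if_le_first_block:
  assumes "f \<in> borel_measurable S" "\<And>w. \<bar>f w\<bar> \<le> C * real (first_block w)"
  shows "integrable S (\<lambda>w. f w ^ 2)"
proof (rule Bochner_Integration.integrable_bound)
  show "integrable S (\<lambda>w. C\<^sup>2 * real (first_block w) ^ 2)"
    using integrable_first_block_sq by simp
  have "f w ^ 2 \<le> (C * real (first_block w)) ^ 2" for w
    using assms(2)[of w] by (metis abs_ge_zero power2_abs power_mono)
  then show "AE w in S. norm (f w ^ 2) \<le> norm (C\<^sup>2 * real (first_block w) ^ 2)"
    by (simp add: power_mult_distrib)
qed (use assms(1) in measurable)

lemma expectation_first_block_pos: "0 < expectation (\<lambda>w. real (first_block w))"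
proof -
  have int: "integrable S (\<lambda>w. real (first_block w))"
    by (rule square_integrable_imp_integrable[OF _ integrable_first_block_sq])
      (rule measurable_compose[OF measurable_first_block], simp)
  have "\<not> (AE w in S. real (first_block w) = 0)"
  proof
    assume "AE w in S. real (first_block w) = 0"
    then obtain w where "w \<in> cyclic_block 1" "real (first_block w) = 0"
      using AE_witness[OF _ sets_cyclic_block emeasure_cyclic_block_ne_0[of 1]] by blast
    then show False using first_block_cyclic_block[of w 1] by simp
  qed
  then have "expectation (\<lambda>w. real (first_block w)) \<noteq> 0"
    using integral_nonneg_eq_0_iff_AE[OF int] by auto
  moreover have "0 \<le> expectation (\<lambda>w. real (first_block w))" by (rule integral_nonneg_AE) simp
  ultimately show ?thesis by linarith
qed

lemma measurable_cycle_statistic [measurable]: "cycle_statistic a l \<in> borel_measurable S"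
  unfolding cycle_statistic_def[abs_def] by (rule measurable_first_block_functional) simp

lemma integrable_sq_cycle_statistic_combination:
  "integrable S (\<lambda>w. (cycle_statistic a l w * \<alpha> - real (first_block w) * \<beta>)\<^sup>2)"
proof (rule integrable_sq_if_le_first_block)
  show "(\<lambda>w. cycle_statistic a l w * \<alpha> - real (first_block w) * \<beta>) \<in> borel_measurable S"
    by measurable
  fix w
  have "\<bar>cycle_statistic a l w * \<alpha> - real (first_block w) * \<beta>\<bar> \<le>
      \<bar>cycle_statistic a l w\<bar> * \<bar>\<alpha>\<bar> + real (first_block w) * \<bar>\<beta>\<bar>"
    using abs_triangle_ineq4[of "cycle_statistic a l w * \<alpha>" "real (first_block w) * \<beta>"]
    by (simp add: abs_mult)
  also have "\<dots> \<le> (\<Sum>j=1..l. \<bar>a j\<bar>) * real (first_block w) * \<bar>\<alpha>\<bar> + real (first_block w) * \<bar>\<beta>\<bar>"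
    using abs_cycle_statistic_le by (intro add_mono mult_right_mono) auto
  finally show "\<bar>cycle_statistic a l w * \<alpha> - real (first_block w) * \<beta>\<bar> \<le>
      ((\<Sum>j=1..l. \<bar>a j\<bar>) * \<bar>\<alpha>\<bar> + \<bar>\<beta>\<bar>) * real (first_block w)"
    by (simp add: algebra_simps)
qed

lemma eq_0_if_AE_const_on_cyclic_blocks:
  fixes b :: "nat \<Rightarrow> real"
  assumes "AE w in S. f w = c"
    and "\<And>n w. 1 \<le> n \<Longrightarrow> w \<in> cyclic_block n \<Longrightarrow> f w = b n * x - real n * y"
    and "\<And>n. l < n \<Longrightarrow> b n = 0" "x \<noteq> 0" "1 \<le> n"
  shows "b n = 0"
proof (rule eq_0_if_const_affine_combination[of b x y c l])
  fix n :: nat assume "1 \<le> n"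
  then obtain w where "w \<in> cyclic_block n" "f w = c"
    using AE_witness[OF assms(1) sets_cyclic_block emeasure_cyclic_block_ne_0] by blast
  then show "b n * x - real n * y = c" using assms(2)[OF \<open>1 \<le> n\<close>] by simp
qed (use assms in auto)

end

theorem lemma3p4:
  fixes q :: real and l :: nat and a :: "nat \<Rightarrow> real"
  assumes "0 < q" "q < 1"
    and "\<exists>j\<in>{1..l}. a j \<noteq> 0"
  defines "M \<equiv> mallows_space q"
    and "X \<equiv> (\<lambda>w. real (first_block w))"
    and "Y \<equiv> (\<lambda>w. \<Sum>j=1..l. a j *
                 real (cycle_count (first_block_perm w) {1..first_block w} j))"
  defines "V \<equiv> (\<lambda>w. Y w * integral\<^sup>L M X - X w * integral\<^sup>L M Y)"
  shows "integral\<^sup>L M (\<lambda>w. (V w - integral\<^sup>L M V)\<^sup>2) > 0"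
proof -
  interpret mallows_sample q using assms(1,2) by unfold_locales
  have M: "M = S" unfolding M_def by (rule mallows_space_eq)
  have V: "V = (\<lambda>w. cycle_statistic a l w * expectation X - real (first_block w) * expectation Y)"
    unfolding V_def Y_def X_def M cycle_statistic_def ..
  have V_cyclic: "V w = (if n \<le> l then a n else 0) * expectation X - real n * expectation Y"
    if "1 \<le> n" "w \<in> cyclic_block n" for n w
    using that by (simp add: V cycle_statistic_cyclic_block first_block_cyclic_block)
  have "expectation X \<noteq> 0" using expectation_first_block_pos unfolding X_def by simp
  show ?thesis
  proof (rule ccontr)
    assume "\<not> ?thesis"
    then have "variance V = 0" using variance_positive[of V] unfolding M by linarith
    moreover have "V \<in> borel_measurable S" "integrable S (\<lambda>w. V w ^ 2)"
      unfolding V by (measurable, rule integrable_sq_cycle_statistic_combination)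
    ultimately have "AE w in S. V w = expectation V"
      by (intro AE_eq_expectation_if_variance_eq_0)
    obtain j where j: "j \<in> {1..l}" "a j \<noteq> 0" using assms(3) by blast
    have "(if j \<le> l then a j else 0) = 0"
      by (rule eq_0_if_AE_const_on_cyclic_blocks[where l = l, OF \<open>AE w in S. V w = expectation V\<close> V_cyclic _
          \<open>expectation X \<noteq> 0\<close>]) (use j in auto)
    then show False using j by simp
  qed
qed

end
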